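(* Let $S$ be a memory system satisfying the Causality assumption. For all $n,m,v\ge1$: every unambiguous trace of $S(n,m,v)$ is sequentially consistent if and only if there is a witness $\Omega$ for $S(n,m,v)$ such that the graph $G(\Omega)(\tau)$ is acyclic for every unambiguous trace $\tau$ of $S(n,m,v)$.
   Context: Notation: $\mathbb{N}_n=\{1,\dots,n\}$, $\mathbb{W}_n=\{0,\dots,n\}$. Memory events $E(n,m,v)=\{R,W\}\times\mathbb{N}_n\times\mathbb{N}_m\times\mathbb{W}_v$; for $e=\langle a,b,c,d\rangle$, $op(e)=a$, $proc(e)=b$, $loc(e)=c$, $data(e)=d$; $0$ models the initial value of every location. A memory system is a family $S=(S(n,m,v))_{n,m,v\ge1}$, $S(n,m,v)$ a regular set of finite runs over an alphabet $E^a(n,m,v)\supseteq E(n,m,v)$ (other letters are internal events). The trace of a run is its subsequence of memory events; traces of $S(n,m,v)$ are traces of its runs. For a sequence $\tau$ of memory events with positions $1,\dots,|\tau|$: $P(\tau,i)=\{k: proc(\tau(k))=i\}$, $L(\tau,j)=\{k: loc(\tau(k))=j\}$, $L^w(\tau,j)=\{k\in L(\tau,j): op(\tau(k))=W\}$, $L^r(\tau,j)=\{k\in L(\tau,j): op(\tau(k))=R\}$. A trace $\tau$ is unambiguous if for every location $j$ and $x\in L^w(\tau,j)$, $data(\tau(x))\ne0$ and $data(\tau(x))\ne data(\tau(y))$ for all $y\in L^w(\tau,j)\setminus\{x\}$. Causality assumption: for all $n,m,v\ge1$, every trace $\tau$ of $S(n,m,v)$, every location $j$ and every $x\in L^r(\tau,j)$,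 either $data(\tau(x))=0$ or there is $y\in L^w(\tau,j)$ with $data(\tau(x))=data(\tau(y))$. Sequential consistency: $\tau$ is serial if for every position $u$, with $upto(\tau,u)=\{k\le u: op(\tau(k))=W,\ loc(\tau(k))=loc(\tau(u))\}$, $data(\tau(u))=0$ when $upto(\tau,u)=\emptyset$ and $data(\tau(u))=data(\tau(\max upto(\tau,u)))$ otherwise. $M(\tau,i)=\{\langle u,v\rangle: u,v\in P(\tau,i), u<v\}$. $\tau$ is sequentially consistent if some permutation $f$ of $\mathbb{N}_{|\tau|}$ satisfies (C1) $\langle u,v\rangle\in M(\tau,i)$ for some $i$ implies $f(u)<f(v)$, and (C2) $\tau_{f^{-1}(1)}\cdots\tau_{f^{-1}(|\tau|)}$ is serial. A witness $\Omega$ for $S(n,m,v)$ assigns to every trace $\tau$ of $S(n,m,v)$ and location $j$ a strict total order $\Omega(\tau,j)$ on $L^w(\tau,j)$. For unambiguous $\tau$, $\Omega^e(\tau,j)\subseteq L(\tau,j)^2$: $\langle x,y\rangle\in\Omega^e(\tau,j)$ iff (1) $data(\tau(x))=data(\tau(y))$, $op(\tau(x))=W$, $op(\tau(y))=R$; or (2) $data(\tau(x))=0$ and $data(\tau(y))\ne0$; or (3) there are $a,b\in L^w(\tau,j)$ with $\langle a,b\rangle\in\Omega(\tau,j)$, $data(\tau(a))=data(\tau(x))$, $data(\tau(b))=data(\tau(y))$. The constraint graph $G(\Omega)(\tau)$ is the directed graph with vertex set $\{1,\dots,|\tau|\}$ and edge set $\bigcup_{1\le i\le n}M(\tau,i)\cup\bigcup_{1\le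 j\le m}\Omega^e(\tau,j)$. *)

theory Defs
  imports Main
begin

datatype mop = R | W

type_synonym event = "mop \<times> nat \<times> nat \<times> nat"

definition ev_op :: "event \<Rightarrow> mop" where "ev_op e = fst e"
definition ev_proc :: "event \<Rightarrow> nat" where "ev_proc e = fst (snd e)"
definition ev_loc :: "event \<Rightarrow> nat" where "ev_loc e = fst (snd (snd e))"
definition ev_data :: "event \<Rightarrow> nat" where "ev_data e = snd (snd (snd e))"

definition events :: "nat \<Rightarrow> nat \<Rightarrow> nat \<Rightarrow> event set" where
  "events n m v = UNIV \<times> {1..n} \<times> {1..m} \<times> {0..v}"

datatype 'i letter = Mem event | Internal 'i

definition regular_over :: "'a set \<Rightarrow> 'a list set \<Rightarrow> bool" where
  "regular_over A L \<longleftrightarrow> finite A \<and>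
     (\<exists>(Q :: nat set) q0 (\<delta> :: nat \<Rightarrow> 'a \<Rightarrow> nat) F.
        finite Q \<and> q0 \<in> Q \<and> (\<forall>q\<in>Q. \<forall>a\<in>A. \<delta> q a \<in> Q) \<and> F \<subseteq> Q \<and>
        L = {w. set w \<subseteq> A \<and> foldl \<delta> q0 w \<in> F})"

text \<open>A memory system: for all \<open>n,m,v \<ge> 1\<close>, \<open>S n m v\<close> is a regular set of finite runs over
  an alphabet \<open>E^a(n,m,v) \<supseteq> E(n,m,v)\<close> (the extra letters being internal events).\<close>
definition memory_system :: "(nat \<Rightarrow> nat \<Rightarrow> nat \<Rightarrow> 'i letter list set) \<Rightarrow> bool" where
  "memory_system S \<longleftrightarrow> (\<forall>n m v. n \<ge> 1 \<longrightarrow> m \<ge> 1 \<longrightarrow> v \<ge> 1 \<longrightarrow>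
     (\<exists>Ia. regular_over (Mem ` events n m v \<union> Internal ` Ia) (S n m v)))"

fun trace :: "'i letter list \<Rightarrow> event list" where
  "trace [] = []"
| "trace (Mem e # r) = e # trace r"
| "trace (Internal _ # r) = trace r"

definition traces :: "'i letter list set \<Rightarrow> event list set" where
  "traces Runs = trace ` Runs"

section \<open>Positions (0-based: positions of \<open>\<tau>\<close> are \<open>0..<length \<tau>\<close>)\<close>

definition Pset :: "event list \<Rightarrow> nat \<Rightarrow> nat set" where
  "Pset \<tau> i = {k. k < length \<tau> \<and> ev_proc (\<tau> ! k) = i}"

definition Lset :: "event list \<Rightarrow> nat \<Rightarrow> nat set" where
  "Lset \<tau> j = {k. k < length \<tau> \<and> ev_loc (\<tau> ! k) = j}"

definition Lw :: "event list \<Rightarrow> nat \<Rightarrow> nat set" where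
  "Lw \<tau> j = {k \<in> Lset \<tau> j. ev_op (\<tau> ! k) = W}"

definition Lr :: "event list \<Rightarrow> nat \<Rightarrow> nat set" where
  "Lr \<tau> j = {k \<in> Lset \<tau> j. ev_op (\<tau> ! k) = R}"

definition unambiguous :: "event list \<Rightarrow> bool" where
  "unambiguous \<tau> \<longleftrightarrow> (\<forall>j. \<forall>x\<in>Lw \<tau> j. ev_data (\<tau> ! x) \<noteq> 0 \<and>
      (\<forall>y\<in>Lw \<tau> j - {x}. ev_data (\<tau> ! x) \<noteq> ev_data (\<tau> ! y)))"

definition causality :: "(nat \<Rightarrow> nat \<Rightarrow> nat \<Rightarrow> 'i letter list set) \<Rightarrow> bool" where
  "causality S \<longleftrightarrow> (\<forall>n m v. n \<ge> 1 \<longrightarrow> m \<ge> 1 \<longrightarrow> v \<ge> 1 \<longrightarrow>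
     (\<forall>\<tau>\<in>traces (S n m v). \<forall>j. \<forall>x\<in>Lr \<tau> j.
        ev_data (\<tau> ! x) = 0 \<or> (\<exists>y\<in>Lw \<tau> j. ev_data (\<tau> ! x) = ev_data (\<tau> ! y))))"

definition upto_w :: "event list \<Rightarrow> nat \<Rightarrow> nat set" where
  "upto_w \<tau> u = {k. k \<le> u \<and> ev_op (\<tau> ! k) = W \<and> ev_loc (\<tau> ! k) = ev_loc (\<tau> ! u)}"

definition serial :: "event list \<Rightarrow> bool" where
  "serial \<tau> \<longleftrightarrow> (\<forall>u < length \<tau>.
     (if upto_w \<tau> u = {} then ev_data (\<tau> ! u) = 0
      else ev_data (\<tau> ! u) = ev_data (\<tau> ! Max (upto_w \<tau> u))))"

definition Mrel :: "event list \<Rightarrow> nat \<Rightarrow> (nat \<times> nat) set" where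
  "Mrel \<tau> i = {(u, w). u \<in> Pset \<tau> i \<and> w \<in> Pset \<tau> i \<and> u < w}"

text \<open>\<open>f\<close> is a permutation of the positions; the permuted sequence has at position \<open>p\<close>
  the event \<open>\<tau>(f\<^sup>-\<^sup>1(p))\<close>.\<close>
definition seq_consistent :: "event list \<Rightarrow> bool" where
  "seq_consistent \<tau> \<longleftrightarrow> (\<exists>f. bij_betw f {..<length \<tau>} {..<length \<tau>} \<and>
     (\<forall>i u w. (u, w) \<in> Mrel \<tau> i \<longrightarrow> f u < f w) \<and>
     serial (map (\<lambda>p. \<tau> ! the_inv_into {..<length \<tau>} f p) [0..<length \<tau>]))"

definition strict_total_on :: "'a set \<Rightarrow> ('a \<times> 'a) set \<Rightarrow> bool" where
  "strict_total_on A r \<longleftrightarrow> r \<subseteq> A \<times> A \<and> irrefl r \<and> trans r \<and>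
     (\<forall>x\<in>A. \<forall>y\<in>A. x \<noteq> y \<longrightarrow> (x, y) \<in> r \<or> (y, x) \<in> r)"

definition witness :: "'i letter list set \<Rightarrow> (event list \<Rightarrow> nat \<Rightarrow> (nat \<times> nat) set) \<Rightarrow> bool" where
  "witness Runs \<Omega> \<longleftrightarrow> (\<forall>\<tau>\<in>traces Runs. \<forall>j. strict_total_on (Lw \<tau> j) (\<Omega> \<tau> j))"

definition Omega_e :: "(event list \<Rightarrow> nat \<Rightarrow> (nat \<times> nat) set) \<Rightarrow> event list \<Rightarrow> nat \<Rightarrow> (nat \<times> nat) set" where
  "Omega_e \<Omega> \<tau> j = {(x, y). x \<in> Lset \<tau> j \<and> y \<in> Lset \<tau> j \<and>
     ((ev_data (\<tau> ! x) = ev_data (\<tau> ! y) \<and> ev_op (\<tau> ! x) = W \<and> ev_op (\<tau> ! y) = R)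
      \<or> (ev_data (\<tau> ! x) = 0 \<and> ev_data (\<tau> ! y) \<noteq> 0)
      \<or> (\<exists>a\<in>Lw \<tau> j. \<exists>b\<in>Lw \<tau> j. (a, b) \<in> \<Omega> \<tau> j \<and>
            ev_data (\<tau> ! a) = ev_data (\<tau> ! x) \<and> ev_data (\<tau> ! b) = ev_data (\<tau> ! y)))}"

text \<open>Edge set of the constraint graph \<open>G(\<Omega>)(\<tau>)\<close> for \<open>S(n,m,v)\<close>; vertices are the positions of \<open>\<tau>\<close>.\<close>
definition constraint_edges ::
  "nat \<Rightarrow> nat \<Rightarrow> (event list \<Rightarrow> nat \<Rightarrow> (nat \<times> nat) set) \<Rightarrow> event list \<Rightarrow> (nat \<times> nat) set" where
  "constraint_edges n m \<Omega> \<tau> = (\<Union>i\<in>{1..n}. Mrel \<tau> i) \<union> (\<Union>j\<in>{1..m}. Omega_e \<Omega> \<tau> j)"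

end

theory Submission
  imports Defs
begin

(* Given serialisations f of the unambiguous traces, ordering the writes to each location by f
   gives a witness whose constraint graph only has edges going forward in f: in a serial
   execution a read returns the value of the last write to its location before it, and this
   write is unique by unambiguity and exists by causality whenever the value is nonzero.
   Conversely, a topological order f of an acyclic constraint graph is a serialisation, since
   the edges derived from the witness place each read after the write it reads from but before
   every write that the witness orders after that one, and place a read of 0 before all writes. *)

section \<open>Linear extensions\<close>

lemma topological_sort_exists:
  assumes "finite A" and "acyclic r"
  shows "\<exists>xs. distinct xs \<and> set xs = A \<and> sorted_wrt (\<lambda>a b. (b, a) \<notin> r) xs"
  using assms(1)
proof (induction rule: finite_remove_induct)
  case empty
  show ?case by simp
next
  case (remove A)
  have "acyclic (r \<inter> A \<times> A)"
    using assms(2) by (rule acyclic_subset) blast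
  then have "wf (r \<inter> A \<times> A)"
    using remove.hyps(1) by (intro finite_acyclic_wf) (simp_all add: finite_Int)
  then obtain x where x: "x \<in> A" and minimal: "\<forall>y\<in>A. (y, x) \<notin> r"
    using wf_eq_minimal[THEN iffD1, rule_format, of _ _ A] remove.hyps(2) by blast
  obtain xs where "distinct xs" "set xs = A - {x}" "sorted_wrt (\<lambda>a b. (b, a) \<notin> r) xs"
    using remove.IH[OF x] by blast
  with x minimal show ?case
    by (intro exI[of _ "x # xs"]) auto
qed

lemma acyclic_linear_extension:
  fixes N :: nat
  assumes "acyclic r" and "r \<subseteq> {..<N} \<times> {..<N}"
  shows "\<exists>f. bij_betw f {..<N} {..<N} \<and> (\<forall>(a, b) \<in> r. f a < f b)"
proof -
  obtain xs where xs: "distinct xs" "set xs = {..<N}"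
    and sorted: "sorted_wrt (\<lambda>a b. (b, a) \<notin> r) xs"
    using topological_sort_exists[OF finite_lessThan assms(1)] by blast
  have len: "length xs = N"
    using distinct_card[OF xs(1)] xs(2) by simp
  have nth: "bij_betw ((!) xs) {..<N} {..<N}"
    using bij_betw_nth[OF xs(1)] xs(2) len by simp
  define f where "f = the_inv_into {..<N} ((!) xs)"
  have f: "bij_betw f {..<N} {..<N}"
    unfolding f_def by (rule bij_betw_the_inv_into[OF nth])
  have nth_f: "xs ! f a = a" if "a < N" for a
    unfolding f_def using nth that by (simp add: bij_betw_def f_the_inv_into_f)
  have "f a < f b" if "(a, b) \<in> r" for a b
  proof (rule ccontr)
    assume "\<not> f a < f b"
    moreover have "a < N" "b < N" "a \<noteq> b"
      using that assms by (auto simp: acyclic_irrefl irrefl_def)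
    moreover from this have "f a \<noteq> f b" "f a < N"
      using f by (auto simp: bij_betw_def inj_on_def)
    ultimately have "(xs ! f a, xs ! f b) \<notin> r"
      using sorted_wrt_nth_less[OF sorted, of "f b" "f a"] len by simp
    with that show False
      using nth_f \<open>a < N\<close> \<open>b < N\<close> by simp
  qed
  with f show ?thesis by blast
qed

lemma strict_total_on_less_image:
  "inj_on f A \<Longrightarrow> strict_total_on A {(a, b) \<in> A \<times> A. f a < (f b :: 'b :: linorder)}"
  by (auto simp: strict_total_on_def irrefl_def trans_def inj_on_def) (meson linorder_neqE)

lemma set_trace: "set (trace r) = {e. Mem e \<in> set r}"
  by (induction r rule: trace.induct) auto

lemma set_trace_subset_events:
  assumes "memory_system S" and "n \<ge> 1" "m \<ge> 1" "v \<ge> 1" and "\<tau> \<in> traces (S n m v)"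
  shows "set \<tau> \<subseteq> events n m v"
proof -
  obtain Ia where "regular_over (Mem ` events n m v \<union> Internal ` Ia) (S n m v)"
    using assms(1-4) unfolding memory_system_def by blast
  then have "set r \<subseteq> Mem ` events n m v \<union> Internal ` Ia" if "r \<in> S n m v" for r
    using that unfolding regular_over_def by blast
  then show ?thesis
    using assms(5) by (fastforce simp: traces_def set_trace)
qed

lemma Lset_less_length: "x \<in> Lset \<tau> j \<Longrightarrow> x < length \<tau>"
  by (simp add: Lset_def)

lemma ev_loc_if_Lset: "x \<in> Lset \<tau> j \<Longrightarrow> ev_loc (\<tau> ! x) = j"
  by (simp add: Lset_def)

lemma Lset_if_Lw: "w \<in> Lw \<tau> j \<Longrightarrow> w \<in> Lset \<tau> j"
  by (simp add: Lw_def)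

lemma Lw_less_length: "w \<in> Lw \<tau> j \<Longrightarrow> w < length \<tau>"
  by (simp add: Lw_def Lset_def)

lemma unambiguous_write_nonzero: "unambiguous \<tau> \<Longrightarrow> w \<in> Lw \<tau> j \<Longrightarrow> ev_data (\<tau> ! w) \<noteq> 0"
  by (simp add: unambiguous_def)

lemma unambiguous_write_eq:
  "unambiguous \<tau> \<Longrightarrow> a \<in> Lw \<tau> j \<Longrightarrow> b \<in> Lw \<tau> j \<Longrightarrow>
    ev_data (\<tau> ! a) = ev_data (\<tau> ! b) \<Longrightarrow> a = b"
  unfolding unambiguous_def by blast

definition causal_trace :: "event list \<Rightarrow> bool" where
  "causal_trace \<tau> \<longleftrightarrow> (\<forall>j. \<forall>x \<in> Lr \<tau> j.
     ev_data (\<tau> ! x) = 0 \<or> (\<exists>y \<in> Lw \<tau> j. ev_data (\<tau> ! x) = ev_data (\<tau> ! y)))"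

lemma causal_trace_if_causality:
  "causality S \<Longrightarrow> n \<ge> 1 \<Longrightarrow> m \<ge> 1 \<Longrightarrow> v \<ge> 1 \<Longrightarrow> \<tau> \<in> traces (S n m v) \<Longrightarrow> causal_trace \<tau>"
  by (simp add: causality_def causal_trace_def)

lemma causal_trace_source:
  assumes "causal_trace \<tau>" and "x \<in> Lset \<tau> j" and "ev_data (\<tau> ! x) \<noteq> 0"
  obtains y where "y \<in> Lw \<tau> j" and "ev_data (\<tau> ! x) = ev_data (\<tau> ! y)"
proof (cases "ev_op (\<tau> ! x)")
  case R
  then have "x \<in> Lr \<tau> j"
    using assms(2) by (simp add: Lr_def)
  then obtain y where "y \<in> Lw \<tau> j" "ev_data (\<tau> ! x) = ev_data (\<tau> ! y)"
    using assms(1,3) unfolding causal_trace_def by metis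
  then show ?thesis
    by (rule that)
next
  case W
  then show ?thesis
    using assms(2) that[of x] by (simp add: Lw_def)
qed

section \<open>Serialisations\<close>

definition permute :: "event list \<Rightarrow> (nat \<Rightarrow> nat) \<Rightarrow> event list" where
  "permute \<tau> f = map (\<lambda>p. \<tau> ! the_inv_into {..<length \<tau>} f p) [0..<length \<tau>]"

definition writes_before :: "event list \<Rightarrow> (nat \<Rightarrow> nat) \<Rightarrow> nat \<Rightarrow> nat set" where
  "writes_before \<tau> f z = {w \<in> Lw \<tau> (ev_loc (\<tau> ! z)). f w \<le> f z}"

definition last_write :: "event list \<Rightarrow> (nat \<Rightarrow> nat) \<Rightarrow> nat \<Rightarrow> nat \<Rightarrow> bool" where
  "last_write \<tau> f z a \<longleftrightarrow> a \<in> writes_before \<tau> f z \<and> (\<forall>w \<in> writes_before \<tau> f z. f w \<le> f a)"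

definition serial_along :: "event list \<Rightarrow> (nat \<Rightarrow> nat) \<Rightarrow> bool" where
  "serial_along \<tau> f \<longleftrightarrow> (\<forall>z < length \<tau>.
     (writes_before \<tau> f z = {} \<and> ev_data (\<tau> ! z) = 0) \<or>
     (\<exists>a. last_write \<tau> f z a \<and> ev_data (\<tau> ! z) = ev_data (\<tau> ! a)))"

lemma serial_alongE:
  assumes "serial_along \<tau> f" and "z < length \<tau>"
  obtains (no_write) "writes_before \<tau> f z = {}" and "ev_data (\<tau> ! z) = 0"
    | (last_write) a where "last_write \<tau> f z a" and "ev_data (\<tau> ! z) = ev_data (\<tau> ! a)"
  using assms unfolding serial_along_def by metis

lemma last_write_Lw: "last_write \<tau> f z a \<Longrightarrow> a \<in> Lw \<tau> (ev_loc (\<tau> ! z))"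
  by (simp add: last_write_def writes_before_def)

lemma last_write_iff_Max:
  "last_write \<tau> f z a \<longleftrightarrow> a \<in> writes_before \<tau> f z \<and> f a = Max (f ` writes_before \<tau> f z)"
proof -
  have "finite (writes_before \<tau> f z)"
    by (rule finite_subset[of _ "{..<length \<tau>}"]) (auto simp: writes_before_def Lw_less_length)
  then show ?thesis
    by (auto simp: last_write_def intro!: Max_eqI[symmetric])
qed

lemma last_write_unique:
  assumes "inj_on f {..<length \<tau>}" and "last_write \<tau> f z a" and "last_write \<tau> f z b"
  shows "a = b"
proof -
  have "a \<in> Lw \<tau> (ev_loc (\<tau> ! z))" "b \<in> Lw \<tau> (ev_loc (\<tau> ! z))" "f a = f b"
    using assms(2,3) by (simp_all add: last_write_iff_Max writes_before_def)
  with assms(1) show ?thesis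
    by (auto simp: inj_on_def dest: Lw_less_length)
qed

context
  fixes \<tau> :: "event list" and f :: "nat \<Rightarrow> nat"
  assumes f: "bij_betw f {..<length \<tau>} {..<length \<tau>}"
begin

lemma nth_permute: "p < length \<tau> \<Longrightarrow> permute \<tau> f ! p = \<tau> ! the_inv_into {..<length \<tau>} f p"
  by (simp add: permute_def)

lemma nth_permute_apply: "z < length \<tau> \<Longrightarrow> permute \<tau> f ! f z = \<tau> ! z"
  using bij_betw_apply[OF f] the_inv_into_f_f[OF bij_betw_imp_inj_on[OF f]] by (simp add: nth_permute)

lemma upto_w_permute:
  assumes z: "z < length \<tau>"
  shows "upto_w (permute \<tau> f) (f z) = f ` writes_before \<tau> f z"
proof (intro equalityI subsetI)
  fix k assume k: "k \<in> upto_w (permute \<tau> f) (f z)"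
  define w where "w = the_inv_into {..<length \<tau>} f k"
  have "k < length \<tau>"
    using k bij_betw_apply[OF f] z by (fastforce simp: upto_w_def)
  then have "w < length \<tau>" "f w = k"
    using bij_betw_apply[OF bij_betw_the_inv_into[OF f]] f_the_inv_into_f_bij_betw[OF f]
    by (simp_all add: w_def)
  with k show "k \<in> f ` writes_before \<tau> f z"
    using z by (auto simp: upto_w_def writes_before_def Lw_def Lset_def nth_permute_apply)
next
  fix k assume "k \<in> f ` writes_before \<tau> f z"
  then show "k \<in> upto_w (permute \<tau> f) (f z)"
    using z by (auto simp: upto_w_def writes_before_def nth_permute_apply Lw_def Lset_def)
qed

lemma serial_at_permute_iff:
  assumes z: "z < length \<tau>"
  shows "(if upto_w (permute \<tau> f) (f z) = {} then ev_data (permute \<tau> f ! f z) = 0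
          else ev_data (permute \<tau> f ! f z) =
            ev_data (permute \<tau> f ! Max (upto_w (permute \<tau> f) (f z))))
    \<longleftrightarrow> (writes_before \<tau> f z = {} \<and> ev_data (\<tau> ! z) = 0) \<or>
        (\<exists>a. last_write \<tau> f z a \<and> ev_data (\<tau> ! z) = ev_data (\<tau> ! a))"
proof (cases "writes_before \<tau> f z = {}")
  case True
  then show ?thesis
    using z by (simp add: upto_w_permute nth_permute_apply last_write_def)
next
  case False
  let ?W = "writes_before \<tau> f z"
  have "finite ?W"
    by (rule finite_subset[of _ "{..<length \<tau>}"]) (auto simp: writes_before_def Lw_less_length)
  with False have "Max (f ` ?W) \<in> f ` ?W"
    by simp
  then obtain a where a: "a \<in> ?W" "f a = Max (f ` ?W)"
    by (metis imageE)
  then have "last_write \<tau> f z a"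
    by (simp add: last_write_iff_Max)
  moreover have "a < length \<tau>"
    using a(1) Lw_less_length by (auto simp: writes_before_def)
  ultimately show ?thesis
    using False z a(2)[symmetric] last_write_unique[OF bij_betw_imp_inj_on[OF f]]
    by (auto simp: upto_w_permute nth_permute_apply)
qed

lemma serial_permute_iff: "serial (permute \<tau> f) \<longleftrightarrow> serial_along \<tau> f"
proof -
  let ?\<sigma> = "permute \<tau> f"
  have "serial ?\<sigma> \<longleftrightarrow> (\<forall>p \<in> f ` {..<length \<tau>}.
      if upto_w ?\<sigma> p = {} then ev_data (?\<sigma> ! p) = 0
      else ev_data (?\<sigma> ! p) = ev_data (?\<sigma> ! Max (upto_w ?\<sigma> p)))"
    using f by (simp add: serial_def permute_def bij_betw_def lessThan_def)
  also have "\<dots> \<longleftrightarrow> serial_along \<tau> f"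
    unfolding serial_along_def by (simp add: serial_at_permute_iff lessThan_def)
  finally show ?thesis .
qed

end

definition sc_order :: "event list \<Rightarrow> (nat \<Rightarrow> nat) \<Rightarrow> bool" where
  "sc_order \<tau> f \<longleftrightarrow> bij_betw f {..<length \<tau>} {..<length \<tau>} \<and>
     (\<forall>i u w. (u, w) \<in> Mrel \<tau> i \<longrightarrow> f u < f w) \<and> serial_along \<tau> f"

lemma seq_consistent_iff_sc_order: "seq_consistent \<tau> \<longleftrightarrow> (\<exists>f. sc_order \<tau> f)"
  unfolding seq_consistent_def sc_order_def permute_def[symmetric]
  using serial_permute_iff by blast

lemma serial_along_read_zero:
  assumes "unambiguous \<tau>" and "serial_along \<tau> f" and z: "z \<in> Lset \<tau> j"
    and "ev_data (\<tau> ! z) = 0" and "w \<in> Lw \<tau> j"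
  shows "f z < f w"
  using assms(2) Lset_less_length[OF z]
proof (cases rule: serial_alongE)
  case no_write
  then show ?thesis
    using assms(5) ev_loc_if_Lset[OF z] by (auto simp: writes_before_def)
next
  case (last_write a)
  then show ?thesis
    using unambiguous_write_nonzero[OF assms(1) last_write_Lw] assms(4) by simp
qed

lemma serial_along_last_write:
  assumes "unambiguous \<tau>" and "serial_along \<tau> f" and z: "z \<in> Lset \<tau> j"
    and "a \<in> Lw \<tau> j" and "ev_data (\<tau> ! z) = ev_data (\<tau> ! a)"
  shows "last_write \<tau> f z a"
  using assms(2) Lset_less_length[OF z]
proof (cases rule: serial_alongE)
  case no_write
  then show ?thesis
    using unambiguous_write_nonzero[OF assms(1,4)] assms(5) by simp
next
  case (last_write b)
  moreover from this have "b \<in> Lw \<tau> j"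
    using last_write_Lw ev_loc_if_Lset[OF z] by metis
  ultimately show ?thesis
    using unambiguous_write_eq[OF assms(1,4)] assms(5) by metis
qed

section \<open>Constraint graphs\<close>

lemma Omega_e_Lset: "(x, y) \<in> Omega_e \<Omega> \<tau> j \<Longrightarrow> x \<in> Lset \<tau> j \<and> y \<in> Lset \<tau> j"
  by (simp add: Omega_e_def)

lemma Omega_e_reads_from:
  "x \<in> Lw \<tau> j \<Longrightarrow> y \<in> Lset \<tau> j \<Longrightarrow> ev_op (\<tau> ! y) = R \<Longrightarrow>
    ev_data (\<tau> ! x) = ev_data (\<tau> ! y) \<Longrightarrow> (x, y) \<in> Omega_e \<Omega> \<tau> j"
  by (simp add: Omega_e_def Lw_def)

lemma Omega_e_initial:
  "x \<in> Lset \<tau> j \<Longrightarrow> y \<in> Lset \<tau> j \<Longrightarrow> ev_data (\<tau> ! x) = 0 \<Longrightarrow> ev_data (\<tau> ! y) \<noteq> 0 \<Longrightarrow>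
    (x, y) \<in> Omega_e \<Omega> \<tau> j"
  by (simp add: Omega_e_def)

lemma Omega_e_ordered:
  "x \<in> Lset \<tau> j \<Longrightarrow> y \<in> Lset \<tau> j \<Longrightarrow>
    (a, b) \<in> \<Omega> \<tau> j \<Longrightarrow> a \<in> Lw \<tau> j \<Longrightarrow> b \<in> Lw \<tau> j \<Longrightarrow>
    ev_data (\<tau> ! a) = ev_data (\<tau> ! x) \<Longrightarrow> ev_data (\<tau> ! b) = ev_data (\<tau> ! y) \<Longrightarrow>
    (x, y) \<in> Omega_e \<Omega> \<tau> j"
  by (auto simp: Omega_e_def)

lemma Omega_eE:
  assumes "(x, y) \<in> Omega_e \<Omega> \<tau> j"
  obtains (reads_from) "x \<in> Lw \<tau> j" "ev_op (\<tau> ! y) = R" "ev_data (\<tau> ! x) = ev_data (\<tau> ! y)"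
    | (initial) "ev_data (\<tau> ! x) = 0" "ev_data (\<tau> ! y) \<noteq> 0"
    | (ordered) a b where "a \<in> Lw \<tau> j" "b \<in> Lw \<tau> j" "(a, b) \<in> \<Omega> \<tau> j"
        "ev_data (\<tau> ! a) = ev_data (\<tau> ! x)" "ev_data (\<tau> ! b) = ev_data (\<tau> ! y)"
  using assms unfolding Omega_e_def Lw_def by auto

lemma Omega_e_increasing:
  assumes un: "unambiguous \<tau>" and causal: "causal_trace \<tau>"
    and inj: "inj_on f {..<length \<tau>}" and serial: "serial_along \<tau> f"
    and \<Omega>: "\<And>a b. (a, b) \<in> \<Omega> \<tau> j \<Longrightarrow> f a < f b"
    and edge: "(x, y) \<in> Omega_e \<Omega> \<tau> j"
  shows "f x < f y"
proof -
  have x: "x \<in> Lset \<tau> j" and y: "y \<in> Lset \<tau> j"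
    using Omega_e_Lset[OF edge] by simp_all
  from edge show ?thesis
  proof (cases rule: Omega_eE)
    case reads_from
    then have "f x \<le> f y"
      using serial_along_last_write[OF un serial y reads_from(1)]
      by (simp add: last_write_def writes_before_def)
    moreover have "x \<noteq> y"
      using reads_from by (auto simp: Lw_def)
    then have "f x \<noteq> f y"
      using inj Lset_less_length[OF x] Lset_less_length[OF y] by (auto simp: inj_on_def)
    ultimately show ?thesis
      by simp
  next
    case initial
    obtain b where b: "b \<in> Lw \<tau> j" "ev_data (\<tau> ! y) = ev_data (\<tau> ! b)"
      using causal_trace_source[OF causal y initial(2)] .
    have "f x < f b"
      using serial_along_read_zero[OF un serial x initial(1) b(1)] .
    moreover have "f b \<le> f y"
      using serial_along_last_write[OF un serial y b] by (simp add: last_write_def writes_before_def)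
    ultimately show ?thesis
      by simp
  next
    case (ordered a b)
    have last_x: "last_write \<tau> f x a" and last_y: "last_write \<tau> f y b"
      using serial_along_last_write[OF un serial] x y ordered by simp_all
    show ?thesis
    proof (rule ccontr)
      assume "\<not> f x < f y"
      then have "b \<in> writes_before \<tau> f x"
        using last_y ordered(2) ev_loc_if_Lset[OF x] by (simp add: last_write_def writes_before_def)
      then have "f b \<le> f a"
        using last_x by (simp add: last_write_def)
      then show False
        using \<Omega>[OF ordered(3)] by simp
    qed
  qed
qed

lemma last_write_if_Omega_e_increasing:
  assumes un: "unambiguous \<tau>" and total: "strict_total_on (Lw \<tau> j) (\<Omega> \<tau> j)"
    and increasing: "\<And>x y. (x, y) \<in> Omega_e \<Omega> \<tau> j \<Longrightarrow> f x < f y"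
    and z: "z \<in> Lset \<tau> j" and y: "y \<in> Lw \<tau> j" "ev_data (\<tau> ! z) = ev_data (\<tau> ! y)"
  shows "last_write \<tau> f z y"
proof -
  have "f y \<le> f z"
  proof (cases "ev_op (\<tau> ! z)")
    case R
    then show ?thesis
      using increasing[OF Omega_e_reads_from[OF y(1) z R y(2)[symmetric]]] by simp
  next
    case W
    then have "z = y"
      using unambiguous_write_eq[OF un _ y] z by (simp add: Lw_def)
    then show ?thesis
      by simp
  qed
  moreover have "f w \<le> f y" if w: "w \<in> Lw \<tau> j" "f w \<le> f z" for w
  proof (cases "w = y")
    case False
    then consider "(w, y) \<in> \<Omega> \<tau> j" | "(y, w) \<in> \<Omega> \<tau> j"
      using total w(1) y(1) unfolding strict_total_on_def by blast
    then show ?thesis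
    proof cases
      case 1
      with w(1) y(1) have "(w, y) \<in> Omega_e \<Omega> \<tau> j"
        by (intro Omega_e_ordered) (auto simp: Lw_def)
      then show ?thesis
        using increasing by fastforce
    next
      case 2
      with w(1) y z have "(z, w) \<in> Omega_e \<Omega> \<tau> j"
        by (intro Omega_e_ordered[of _ _ _ _ y w]) (auto simp: Lw_def)
      then show ?thesis
        using increasing[of z w] w(2) by simp
    qed
  qed simp
  ultimately show ?thesis
    using y(1) ev_loc_if_Lset[OF z] by (simp add: last_write_def writes_before_def)
qed

lemma serial_along_if_Omega_e_increasing:
  assumes un: "unambiguous \<tau>" and causal: "causal_trace \<tau>"
    and total: "\<And>j. strict_total_on (Lw \<tau> j) (\<Omega> \<tau> j)"
    and increasing: "\<And>j x y. (x, y) \<in> Omega_e \<Omega> \<tau> j \<Longrightarrow> f x < f y"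
  shows "serial_along \<tau> f"
  unfolding serial_along_def
proof (intro allI impI)
  fix z assume "z < length \<tau>"
  define j where "j = ev_loc (\<tau> ! z)"
  have z: "z \<in> Lset \<tau> j"
    using \<open>z < length \<tau>\<close> by (simp add: Lset_def j_def)
  show "(writes_before \<tau> f z = {} \<and> ev_data (\<tau> ! z) = 0) \<or>
        (\<exists>a. last_write \<tau> f z a \<and> ev_data (\<tau> ! z) = ev_data (\<tau> ! a))"
  proof (cases "ev_data (\<tau> ! z) = 0")
    case True
    have "f z < f w" if "w \<in> Lw \<tau> j" for w
      using increasing[OF Omega_e_initial[OF z Lset_if_Lw[OF that] True
          unambiguous_write_nonzero[OF un that]]] .
    then have "writes_before \<tau> f z = {}"
      by (force simp: writes_before_def j_def)
    with True show ?thesis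
      by simp
  next
    case False
    obtain y where y: "y \<in> Lw \<tau> j" "ev_data (\<tau> ! z) = ev_data (\<tau> ! y)"
      using causal_trace_source[OF causal z False] .
    have "last_write \<tau> f z y"
      using last_write_if_Omega_e_increasing[where \<Omega> = \<Omega> and f = f,
          OF un total[of j] increasing[of _ _ j] z y] .
    with y(2) show ?thesis
      by blast
  qed
qed

definition all_constraints ::
  "(event list \<Rightarrow> nat \<Rightarrow> (nat \<times> nat) set) \<Rightarrow> event list \<Rightarrow> (nat \<times> nat) set" where
  "all_constraints \<Omega> \<tau> = (\<Union>i. Mrel \<tau> i) \<union> (\<Union>j. Omega_e \<Omega> \<tau> j)"

lemma all_constraints_less_length: "all_constraints \<Omega> \<tau> \<subseteq> {..<length \<tau>} \<times> {..<length \<tau>}"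
  by (auto simp: all_constraints_def Mrel_def Pset_def Omega_e_def Lset_def)

lemma constraint_edges_eq_all_constraints:
  assumes "set \<tau> \<subseteq> events n m v"
  shows "constraint_edges n m \<Omega> \<tau> = all_constraints \<Omega> \<tau>"
proof -
  have in_range: "ev_proc (\<tau> ! k) \<in> {1..n}" "ev_loc (\<tau> ! k) \<in> {1..m}" if "k < length \<tau>" for k
  proof -
    have "\<tau> ! k \<in> events n m v"
      using assms nth_mem[OF that] by blast
    then show "ev_proc (\<tau> ! k) \<in> {1..n}" "ev_loc (\<tau> ! k) \<in> {1..m}"
      by (auto simp: events_def ev_proc_def ev_loc_def)
  qed
  have "Mrel \<tau> i = {}" if "i \<notin> {1..n}" for i
    using that in_range(1) by (auto simp: Mrel_def Pset_def)
  then have "(\<Union>i\<in>{1..n}. Mrel \<tau> i) = (\<Union>i. Mrel \<tau> i)"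
    by blast
  moreover have "Omega_e \<Omega> \<tau> j = {}" if "j \<notin> {1..m}" for j
    using that in_range(2) by (auto simp: Omega_e_def Lset_def)
  then have "(\<Union>j\<in>{1..m}. Omega_e \<Omega> \<tau> j) = (\<Union>j. Omega_e \<Omega> \<tau> j)"
    by blast
  ultimately show ?thesis
    by (simp add: constraint_edges_def all_constraints_def)
qed

lemma acyclic_all_constraints_if_sc_order:
  assumes un: "unambiguous \<tau>" and causal: "causal_trace \<tau>" and f: "sc_order \<tau> f"
    and \<Omega>: "\<And>j a b. (a, b) \<in> \<Omega> \<tau> j \<Longrightarrow> f a < f b"
  shows "acyclic (all_constraints \<Omega> \<tau>)"
proof (rule acyclic_subset)
  show "acyclic (inv_image less_than f)"
    by (simp add: wf_acyclic)
  have inj: "inj_on f {..<length \<tau>}" and program_order: "\<And>i u w. (u, w) \<in> Mrel \<tau> i \<Longrightarrow> f u < f w"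
    and serial: "serial_along \<tau> f"
    using f by (simp_all add: sc_order_def bij_betw_def)
  show "all_constraints \<Omega> \<tau> \<subseteq> inv_image less_than f"
  proof (rule subrelI)
    fix x y assume "(x, y) \<in> all_constraints \<Omega> \<tau>"
    then consider i where "(x, y) \<in> Mrel \<tau> i" | j where "(x, y) \<in> Omega_e \<Omega> \<tau> j"
      unfolding all_constraints_def by blast
    then show "(x, y) \<in> inv_image less_than f"
      using program_order Omega_e_increasing[OF un causal inj serial \<Omega>] by cases auto
  qed
qed

lemma sc_order_if_acyclic_all_constraints:
  assumes un: "unambiguous \<tau>" and causal: "causal_trace \<tau>"
    and total: "\<And>j. strict_total_on (Lw \<tau> j) (\<Omega> \<tau> j)"
    and acyclic: "acyclic (all_constraints \<Omega> \<tau>)"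
  shows "\<exists>f. sc_order \<tau> f"
proof -
  obtain f where f: "bij_betw f {..<length \<tau>} {..<length \<tau>}"
    and increasing: "\<forall>(a, b) \<in> all_constraints \<Omega> \<tau>. f a < f b"
    using acyclic_linear_extension[OF acyclic all_constraints_less_length] by blast
  have "f u < f w" if "(u, w) \<in> Mrel \<tau> i" for i u w
    using increasing that unfolding all_constraints_def by blast
  moreover have "serial_along \<tau> f"
    using serial_along_if_Omega_e_increasing[where \<Omega> = \<Omega> and f = f, OF un causal total]
      increasing unfolding all_constraints_def by blast
  ultimately show ?thesis
    using f by (auto simp: sc_order_def)
qed

(* The fallback id keeps some_sc_order injective on every trace, so that sc_witness is a
   witness also on traces that are not sequentially consistent. *)
definition some_sc_order :: "event list \<Rightarrow> nat \<Rightarrow> nat" where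
  "some_sc_order \<tau> = (if seq_consistent \<tau> then SOME f. sc_order \<tau> f else id)"

definition sc_witness :: "event list \<Rightarrow> nat \<Rightarrow> (nat \<times> nat) set" where
  "sc_witness \<tau> j = {(a, b) \<in> Lw \<tau> j \<times> Lw \<tau> j. some_sc_order \<tau> a < some_sc_order \<tau> b}"

lemma sc_order_some_sc_order: "seq_consistent \<tau> \<Longrightarrow> sc_order \<tau> (some_sc_order \<tau>)"
  using someI_ex[of "sc_order \<tau>"] by (simp add: some_sc_order_def seq_consistent_iff_sc_order)

lemma inj_on_some_sc_order: "inj_on (some_sc_order \<tau>) {..<length \<tau>}"
  using sc_order_some_sc_order[of \<tau>]
  by (cases "seq_consistent \<tau>") (simp_all add: some_sc_order_def sc_order_def bij_betw_def)

lemma witness_sc_witness: "witness Runs sc_witness"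
  unfolding witness_def sc_witness_def
proof (intro ballI allI strict_total_on_less_image)
  show "inj_on (some_sc_order \<tau>) (Lw \<tau> j)" for \<tau> j
    using inj_on_some_sc_order by (rule inj_on_subset) (auto dest: Lw_less_length)
qed

lemma acyclic_sc_witness:
  assumes "unambiguous \<tau>" and "causal_trace \<tau>" and "seq_consistent \<tau>"
  shows "acyclic (all_constraints sc_witness \<tau>)"
proof (rule acyclic_all_constraints_if_sc_order[OF assms(1,2) sc_order_some_sc_order[OF assms(3)]])
  show "some_sc_order \<tau> a < some_sc_order \<tau> b" if "(a, b) \<in> sc_witness \<tau> j" for j a b
    using that by (simp add: sc_witness_def)
qed

theorem theorem5p3:
  fixes S :: "nat \<Rightarrow> nat \<Rightarrow> nat \<Rightarrow> 'i letter list set"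
    and n m v :: nat
  assumes "memory_system S"
    and "causality S"
    and "n \<ge> 1" and "m \<ge> 1" and "v \<ge> 1"
  shows "(\<forall>\<tau>\<in>traces (S n m v). unambiguous \<tau> \<longrightarrow> seq_consistent \<tau>) \<longleftrightarrow>
         (\<exists>\<Omega>. witness (S n m v) \<Omega> \<and>
              (\<forall>\<tau>\<in>traces (S n m v). unambiguous \<tau> \<longrightarrow> acyclic (constraint_edges n m \<Omega> \<tau>)))"
proof
  have causal: "causal_trace \<tau>" and edges: "constraint_edges n m \<Omega> \<tau> = all_constraints \<Omega> \<tau>"
    if "\<tau> \<in> traces (S n m v)" for \<tau> \<Omega>
    using causal_trace_if_causality[OF assms(2-5) that]
      constraint_edges_eq_all_constraints[OF set_trace_subset_events[OF assms(1,3-5) that]]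
    by simp_all
  show "\<exists>\<Omega>. witness (S n m v) \<Omega> \<and>
      (\<forall>\<tau>\<in>traces (S n m v). unambiguous \<tau> \<longrightarrow> acyclic (constraint_edges n m \<Omega> \<tau>))"
    if sc: "\<forall>\<tau>\<in>traces (S n m v). unambiguous \<tau> \<longrightarrow> seq_consistent \<tau>"
  proof (intro exI conjI ballI impI)
    show "witness (S n m v) sc_witness"
      by (rule witness_sc_witness)
    fix \<tau> assume "\<tau> \<in> traces (S n m v)" and "unambiguous \<tau>"
    with sc show "acyclic (constraint_edges n m sc_witness \<tau>)"
      by (simp add: edges causal acyclic_sc_witness)
  qed
  show "\<forall>\<tau>\<in>traces (S n m v). unambiguous \<tau> \<longrightarrow> seq_consistent \<tau>"
    if witness_acyclic: "\<exists>\<Omega>. witness (S n m v) \<Omega> \<and>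
      (\<forall>\<tau>\<in>traces (S n m v). unambiguous \<tau> \<longrightarrow> acyclic (constraint_edges n m \<Omega> \<tau>))"
  proof (intro ballI impI)
    obtain \<Omega> where \<Omega>: "witness (S n m v) \<Omega>"
      and acyclic: "\<forall>\<tau>\<in>traces (S n m v). unambiguous \<tau> \<longrightarrow> acyclic (constraint_edges n m \<Omega> \<tau>)"
      using witness_acyclic by blast
    fix \<tau> assume \<tau>: "\<tau> \<in> traces (S n m v)" and "unambiguous \<tau>"
    then show "seq_consistent \<tau>"
      unfolding seq_consistent_iff_sc_order
      using \<Omega> acyclic causal[OF \<tau>] edges[OF \<tau>]
      by (intro sc_order_if_acyclic_all_constraints[where \<Omega> = \<Omega>]) (auto simp: witness_def)
  qed
qed

end
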